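(* Let $X$ be an infinite discrete space and $G$ a subgroup of $\mathrm S(X)$ with the permutation topology $\tau_\partial$, and suppose the action of $G$ on $X$ is ultratransitive. Then: (1) the maximal equiuniformity $\mathcal U_X$ is totally bounded; (2) the completion of $X$ with respect to $\mathcal U_X$ is the one-point Alexandroff compactification $\alpha X$; (3) $L\wedge R=\mathcal U$; (4) $G$ is Roelcke precompact; (5) the Roelcke compactification of $G$ is the enveloping Ellis semigroup, i.e. the closure of $\jmath(G)$ in $(\alpha X)^{\alpha X}$, and coincides with the Roelcke compactification of $(\mathrm S(X),\tau_\partial)$.
   Context: The action is ultratransitive if for every $n$ and any two $n$-tuples of distinct points $x_1,\dots,x_n$ and $y_1,\dots,y_n$ there is $g\in G$ with $g(x_k)=y_k$. $\tau_\partial$: identity neighbourhood base the pointwise stabilizers $\mathrm{St}_{x_1,\dots,x_n}$. $\mathcal U_X$: uniformity on $X$ with base the partitions $\{\mathrm{St}_{x_1,\dots,x_n}x\mid x\in X\}$. $\mathcal U$: the uniformity on $G$ with base the coverings $\{\{h\in G\mid (g(x_k),h(x_k))\in\mathrm U,\ k=1,\dots,n\}\mid g\in G\}$, $x_1,\dots,x_n\in X$, $\mathrm U$ an entourage of $\mathcal U_X$. $L\wedge R$: the Roelcke uniformity (greatest lower bound of left and right uniformities); Roelcke precompact means it is totally bounded; the Roelcke compactification is the completion with respect to it. $\jmath(g)=(g(x))_{x\in\alpha X}$, where $g$ is extended to $\alpha X$ fixing the point at infinity. *)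

theory Defs
  imports "HOL-Analysis.Analysis"
begin

definition perms :: "('a \<Rightarrow> 'a) set" where
  "perms = {f. bij f}"

definition is_perm_group :: "('a \<Rightarrow> 'a) set \<Rightarrow> bool" where
  "is_perm_group G \<longleftrightarrow> G \<subseteq> perms \<and> id \<in> G \<and> (\<forall>f\<in>G. \<forall>g\<in>G. f \<circ> g \<in> G) \<and> (\<forall>f\<in>G. inv f \<in> G)"

definition ultratransitive :: "('a \<Rightarrow> 'a) set \<Rightarrow> bool" where
  "ultratransitive G \<longleftrightarrow>
     (\<forall>xs ys. distinct xs \<and> distinct ys \<and> length xs = length ys \<longrightarrow> (\<exists>g\<in>G. map g xs = ys))"

definition stab :: "('a \<Rightarrow> 'a) set \<Rightarrow> 'a set \<Rightarrow> ('a \<Rightarrow> 'a) set" where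
  "stab G A = {g \<in> G. \<forall>x\<in>A. g x = x}"

definition is_uniformity :: "'b set \<Rightarrow> ('b \<times> 'b) filter \<Rightarrow> bool" where
  "is_uniformity S U \<longleftrightarrow> eventually (\<lambda>p. p \<in> S \<times> S) U \<and>
     (\<forall>E. eventually (\<lambda>p. p \<in> E) U \<longrightarrow>
        (\<forall>x\<in>S. (x, x) \<in> E) \<and> eventually (\<lambda>(x, y). (y, x) \<in> E) U \<and>
        (\<exists>D. eventually (\<lambda>p. p \<in> D) U \<and> D O D \<subseteq> E))"

definition totally_bounded_unif :: "'b set \<Rightarrow> ('b \<times> 'b) filter \<Rightarrow> bool" where
  "totally_bounded_unif S U \<longleftrightarrow>
     (\<forall>E. eventually (\<lambda>p. p \<in> E) U \<longrightarrow>
        (\<exists>K. finite K \<and> K \<subseteq> S \<and> S \<subseteq> (\<Union>k\<in>K. {y. (k, y) \<in> E})))"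

definition unif_cauchy :: "'b set \<Rightarrow> ('b \<times> 'b) filter \<Rightarrow> 'b filter \<Rightarrow> bool" where
  "unif_cauchy S U F \<longleftrightarrow> F \<noteq> bot \<and> F \<le> principal S \<and>
     (\<forall>E. eventually (\<lambda>p. p \<in> E) U \<longrightarrow> eventually (\<lambda>p. p \<in> E) (F \<times>\<^sub>F F))"

definition unif_converges :: "('b \<times> 'b) filter \<Rightarrow> 'b filter \<Rightarrow> 'b \<Rightarrow> bool" where
  "unif_converges U F x \<longleftrightarrow> (\<forall>E. eventually (\<lambda>p. p \<in> E) U \<longrightarrow> eventually (\<lambda>y. (x, y) \<in> E) F)"

definition unif_complete :: "'b set \<Rightarrow> ('b \<times> 'b) filter \<Rightarrow> bool" where
  "unif_complete S U \<longleftrightarrow> (\<forall>F. unif_cauchy S U F \<longrightarrow> (\<exists>x\<in>S. unif_converges U F x))"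

definition unif_separated :: "'b set \<Rightarrow> ('b \<times> 'b) filter \<Rightarrow> bool" where
  "unif_separated S U \<longleftrightarrow>
     (\<forall>x\<in>S. \<forall>y\<in>S. (\<forall>E. eventually (\<lambda>p. p \<in> E) U \<longrightarrow> (x, y) \<in> E) \<longrightarrow> x = y)"

definition unif_dense :: "'b set \<Rightarrow> ('b \<times> 'b) filter \<Rightarrow> 'b set \<Rightarrow> bool" where
  "unif_dense S U D \<longleftrightarrow> D \<subseteq> S \<and>
     (\<forall>x\<in>S. \<forall>E. eventually (\<lambda>p. p \<in> E) U \<longrightarrow> (\<exists>d\<in>D. (x, d) \<in> E))"

definition unif_induces :: "('b \<times> 'b) filter \<Rightarrow> 'b topology \<Rightarrow> bool" where
  "unif_induces U T \<longleftrightarrow>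
     (\<forall>V. openin T V \<longleftrightarrow> V \<subseteq> topspace T \<and>
        (\<forall>x\<in>V. \<exists>E. eventually (\<lambda>p. p \<in> E) U \<and> {y. (x, y) \<in> E} \<subseteq> V))"

definition is_completion ::
  "'b set \<Rightarrow> ('b \<times> 'b) filter \<Rightarrow> 'c set \<Rightarrow> ('c \<times> 'c) filter \<Rightarrow> ('b \<Rightarrow> 'c) \<Rightarrow> bool" where
  "is_completion S U T V e \<longleftrightarrow>
     is_uniformity S U \<and> is_uniformity T V \<and> unif_separated T V \<and> unif_complete T V \<and>
     e ` S \<subseteq> T \<and> inj_on e S \<and>
     U = inf (filtercomap (map_prod e e) V) (principal (S \<times> S)) \<and>
     unif_dense T V (e ` S)"

text \<open>the uniformity of neighbourhoods of the diagonal (the unique uniformity of a compact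
  Hausdorff space)\<close>
definition topo_unif :: "'b topology \<Rightarrow> ('b \<times> 'b) filter" where
  "topo_unif T = (INF W\<in>{W. openin (prod_topology T T) W \<and> (\<forall>x\<in>topspace T. (x, x) \<in> W)}. principal W)"

definition UX :: "('a \<Rightarrow> 'a) set \<Rightarrow> ('a \<times> 'a) filter" where
  "UX G = (INF A\<in>{A. finite A}. principal {(x, y). \<exists>g\<in>stab G A. g x = y})"

definition left_unif :: "('a \<Rightarrow> 'a) set \<Rightarrow> (('a \<Rightarrow> 'a) \<times> ('a \<Rightarrow> 'a)) filter" where
  "left_unif G = (INF A\<in>{A. finite A}.
      principal {(g, h). g \<in> G \<and> h \<in> G \<and> inv g \<circ> h \<in> stab G A})"

definition right_unif :: "('a \<Rightarrow> 'a) set \<Rightarrow> (('a \<Rightarrow> 'a) \<times> ('a \<Rightarrow> 'a)) filter" where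
  "right_unif G = (INF A\<in>{A. finite A}.
      principal {(g, h). g \<in> G \<and> h \<in> G \<and> h \<circ> inv g \<in> stab G A})"

text \<open>L /\ R: the greatest lower bound (in the lattice of uniformities on G) of L and R,
  i.e. the finest uniformity coarser than both\<close>
definition roelcke_unif :: "('a \<Rightarrow> 'a) set \<Rightarrow> (('a \<Rightarrow> 'a) \<times> ('a \<Rightarrow> 'a)) filter" where
  "roelcke_unif G = Inf {U. is_uniformity G U \<and> left_unif G \<le> U \<and> right_unif G \<le> U}"

text \<open>the uniformity \<U> on G, given by its base of uniform coverings\<close>
definition UU :: "('a \<Rightarrow> 'a) set \<Rightarrow> (('a \<Rightarrow> 'a) \<times> ('a \<Rightarrow> 'a)) filter" where
  "UU G = (INF ae\<in>{(A, E). finite A \<and> eventually (\<lambda>p. p \<in> E) (UX G)}.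
      principal (\<Union>g\<in>G. {h\<in>G. \<forall>x\<in>fst ae. (g x, h x) \<in> snd ae} \<times>
                         {h\<in>G. \<forall>x\<in>fst ae. (g x, h x) \<in> snd ae}))"

section \<open>Alexandroff compactification alpha X = 'a option (None = point at infinity)\<close>

definition alphaX :: "'a option topology" where
  "alphaX = topology (\<lambda>U. None \<in> U \<longrightarrow> finite (- U))"

definition jmap :: "('a \<Rightarrow> 'a) \<Rightarrow> ('a option \<Rightarrow> 'a option)" where
  "jmap g = map_option g"

end

theory Submission
  imports Defs
begin

text \<open>Under ultratransitivity every uniformity in the statement has a base of equivalence
  relations that are kernels of maps with finite range.  For \<open>\<U>\<^sub>X\<close> the orbits of
  \<open>St\<^sub>A\<close> are the points of \<open>A\<close> and the rest of \<open>X\<close>; on \<open>\<alpha>X\<close> and on closed subspaces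
  of \<open>(\<alpha>X)\<^bsup>\<alpha>X\<^esup>\<close>, which are compact, the unique uniformity is generated by the same
  partitions read off at finitely many coordinates; and \<open>L \<and> R\<close> and \<open>\<U>\<close> are both generated
  by the relations "\<open>g\<close> and \<open>h\<close> induce the same partial map \<open>C \<rightharpoonup> C\<close>" for finite \<open>C\<close>.
  For \<open>L \<and> R\<close> this rests on a factorisation: two elements of \<open>G\<close> inducing the same
  partial map differ by a left and a right \<open>St\<^sub>C\<close>-factor, which ultratransitivity supplies.
  Kernels of finite-valued maps give total boundedness at once, compactness gives
  completeness, and matching the bases along \<open>X \<rightarrow> \<alpha>X\<close> and \<open>\<jmath> : G \<rightarrow> K\<close> identifies the
  completions.  Finally, ultratransitivity makes \<open>\<jmath>(G)\<close> dense in \<open>\<jmath>(S(X))\<close>.\<close>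


section \<open>Filter bases\<close>

definition has_base :: "'b filter \<Rightarrow> 'i set \<Rightarrow> ('i \<Rightarrow> 'b set) \<Rightarrow> bool" where
  "has_base F I B \<longleftrightarrow> (\<forall>P. eventually P F \<longleftrightarrow> (\<exists>i\<in>I. \<forall>x\<in>B i. P x))"

lemma has_base_eventuallyI:
  "has_base F I B \<Longrightarrow> i \<in> I \<Longrightarrow> (\<And>x. x \<in> B i \<Longrightarrow> P x) \<Longrightarrow> eventually P F"
  unfolding has_base_def by blast

lemma has_base_eventuallyE:
  assumes "has_base F I B" and "eventually P F"
  obtains i where "i \<in> I" and "\<forall>x\<in>B i. P x"
  using assms unfolding has_base_def by blast

lemma has_base_INF_principal:
  assumes "I \<noteq> {}" and "\<And>i j. i \<in> I \<Longrightarrow> j \<in> I \<Longrightarrow> \<exists>k\<in>I. B k \<subseteq> B i \<inter> B j"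
  shows "has_base (INF i\<in>I. principal (B i)) I B"
proof -
  have "eventually P (INF i\<in>I. principal (B i)) \<longleftrightarrow> (\<exists>i\<in>I. eventually P (principal (B i)))" for P
  proof (rule eventually_INF_base[OF assms(1)])
    fix i j assume "i \<in> I" "j \<in> I"
    then obtain k where "k \<in> I" "B k \<subseteq> B i \<inter> B j"
      using assms(2) by blast
    then show "\<exists>k\<in>I. principal (B k) \<le> inf (principal (B i)) (principal (B j))"
      by (auto simp: inf_principal)
  qed
  then show ?thesis
    by (simp add: has_base_def eventually_principal)
qed

lemma has_base_INF_finite_antimono:
  fixes B :: "'a set \<Rightarrow> 'b set"
  assumes "\<And>A A'. A \<subseteq> A' \<Longrightarrow> B A' \<subseteq> B A"
  shows "has_base (INF A\<in>{A. finite A}. principal (B A)) {A. finite A} B"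
proof (rule has_base_INF_principal)
  fix A A' :: "'a set" assume "A \<in> {A. finite A}" "A' \<in> {A. finite A}"
  then show "\<exists>k\<in>{A. finite A}. B k \<subseteq> B A \<inter> B A'"
    using assms[of A "A \<union> A'"] assms[of A' "A \<union> A'"] by (intro bexI[of _ "A \<union> A'"]) auto
qed auto

lemma has_base_le:
  assumes "has_base F I B" and "has_base F' J B'" and "\<And>i. i \<in> I \<Longrightarrow> \<exists>j\<in>J. B' j \<subseteq> B i"
  shows "F' \<le> F"
proof (rule filter_leI)
  fix P assume "eventually P F"
  then obtain i where "i \<in> I" and P: "\<forall>x\<in>B i. P x"
    by (rule has_base_eventuallyE[OF assms(1)])
  obtain j where "j \<in> J" and "B' j \<subseteq> B i"
    using assms(3)[OF \<open>i \<in> I\<close>] by blast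
  then show "eventually P F'"
    using P by (intro has_base_eventuallyI[OF assms(2)]) auto
qed

lemma has_base_eq:
  assumes "has_base F I B" and "has_base F' J B'"
    and "\<And>i. i \<in> I \<Longrightarrow> \<exists>j\<in>J. B' j \<subseteq> B i" and "\<And>j. j \<in> J \<Longrightarrow> \<exists>i\<in>I. B i \<subseteq> B' j"
  shows "F = F'"
  by (intro antisym has_base_le[OF assms(1,2,3)] has_base_le[OF assms(2,1,4)])

section \<open>Uniformities generated by kernels\<close>

definition kernel_rel :: "'b set \<Rightarrow> ('b \<Rightarrow> 'c) \<Rightarrow> ('b \<times> 'b) set" where
  "kernel_rel S f = {(x, y). x \<in> S \<and> y \<in> S \<and> f x = f y}"

lemma in_kernel_rel [simp]: "(x, y) \<in> kernel_rel S f \<longleftrightarrow> x \<in> S \<and> y \<in> S \<and> f x = f y"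
  by (simp add: kernel_rel_def)

lemma kernel_rel_subset:
  "(\<And>x y. x \<in> S \<Longrightarrow> y \<in> S \<Longrightarrow> f' x = f' y \<Longrightarrow> f x = f y) \<Longrightarrow> kernel_rel S f' \<subseteq> kernel_rel S f"
  by auto

lemma is_uniformity_kernel_base:
  assumes base: "has_base U I (\<lambda>i. kernel_rel S (f i))" and "I \<noteq> {}"
  shows "is_uniformity S U"
  unfolding is_uniformity_def
proof (intro conjI allI impI)
  obtain i where "i \<in> I"
    using \<open>I \<noteq> {}\<close> by blast
  then show "eventually (\<lambda>z. z \<in> S \<times> S) U"
    by (rule has_base_eventuallyI[OF base]) auto
next
  fix E assume "eventually (\<lambda>z. z \<in> E) U"
  then obtain i where i: "i \<in> I" and sub: "kernel_rel S (f i) \<subseteq> E"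
    by (rule has_base_eventuallyE[OF base]) auto
  show "\<forall>x\<in>S. (x, x) \<in> E"
    using sub by auto
  show "eventually (\<lambda>(x, y). (y, x) \<in> E) U"
    using i(1) by (rule has_base_eventuallyI[OF base]) (use sub in auto)
  have "eventually (\<lambda>z. z \<in> kernel_rel S (f i)) U"
    using i(1) by (rule has_base_eventuallyI[OF base])
  moreover have "kernel_rel S (f i) O kernel_rel S (f i) \<subseteq> E"
    using sub by auto
  ultimately show "\<exists>D. eventually (\<lambda>z. z \<in> D) U \<and> D O D \<subseteq> E"
    by blast
qed

lemma totally_bounded_kernel_base:
  assumes "has_base U I (\<lambda>i. kernel_rel S (f i))" and "\<And>i. i \<in> I \<Longrightarrow> finite (f i ` S)"
  shows "totally_bounded_unif S U"
  unfolding totally_bounded_unif_def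
proof (intro allI impI)
  fix E assume "eventually (\<lambda>z. z \<in> E) U"
  then obtain i where "i \<in> I" and sub: "\<forall>z\<in>kernel_rel S (f i). z \<in> E"
    by (rule has_base_eventuallyE[OF assms(1)])
  let ?r = "inv_into S (f i)"
  have rep: "?r (f i y) \<in> S" "f i (?r (f i y)) = f i y" if "y \<in> S" for y
    using that by (simp_all add: inv_into_into f_inv_into_f)
  show "\<exists>K. finite K \<and> K \<subseteq> S \<and> S \<subseteq> (\<Union>k\<in>K. {y. (k, y) \<in> E})"
  proof (intro exI conjI)
    show "finite (?r ` f i ` S)"
      using assms(2)[OF \<open>i \<in> I\<close>] by simp
    show "?r ` f i ` S \<subseteq> S"
      using rep(1) by blast
    show "S \<subseteq> (\<Union>k\<in>?r ` f i ` S. {y. (k, y) \<in> E})"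
    proof
      fix y assume "y \<in> S"
      then have "(?r (f i y), y) \<in> E"
        using rep sub by simp
      then show "y \<in> (\<Union>k\<in>?r ` f i ` S. {y. (k, y) \<in> E})"
        using \<open>y \<in> S\<close> by blast
    qed
  qed
qed

lemma unif_separated_kernel_base:
  assumes V: "has_base V I (\<lambda>i. kernel_rel T (g i))"
    and sep: "\<And>x y. x \<in> T \<Longrightarrow> y \<in> T \<Longrightarrow> x \<noteq> y \<Longrightarrow> \<exists>i\<in>I. g i x \<noteq> g i y"
  shows "unif_separated T V"
  unfolding unif_separated_def
proof (intro ballI impI)
  fix x y assume "x \<in> T" "y \<in> T" and near: "\<forall>E. eventually (\<lambda>z. z \<in> E) V \<longrightarrow> (x, y) \<in> E"
  show "x = y"
  proof (rule ccontr)
    assume "x \<noteq> y"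
    then obtain i where "i \<in> I" "g i x \<noteq> g i y"
      using sep \<open>x \<in> T\<close> \<open>y \<in> T\<close> by blast
    moreover have "eventually (\<lambda>z. z \<in> kernel_rel T (g i)) V"
      using \<open>i \<in> I\<close> by (rule has_base_eventuallyI[OF V])
    ultimately show False
      using near by auto
  qed
qed

lemma has_base_comap:
  assumes "has_base V I B"
  shows "has_base (inf (filtercomap h V) (principal A)) I (\<lambda>i. {z \<in> A. h z \<in> B i})"
  unfolding has_base_def
proof
  fix P
  have "eventually P (inf (filtercomap h V) (principal A)) \<longleftrightarrow>
      (\<exists>Q. eventually Q V \<and> (\<forall>z. Q (h z) \<longrightarrow> z \<in> A \<longrightarrow> P z))"
    by (simp add: eventually_inf_principal eventually_filtercomap)
  also have "\<dots> \<longleftrightarrow> (\<exists>i\<in>I. \<forall>z\<in>{z \<in> A. h z \<in> B i}. P z)"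
  proof
    assume "\<exists>Q. eventually Q V \<and> (\<forall>z. Q (h z) \<longrightarrow> z \<in> A \<longrightarrow> P z)"
    then obtain Q where "eventually Q V" and Q: "\<forall>z. Q (h z) \<longrightarrow> z \<in> A \<longrightarrow> P z"
      by blast
    obtain i where "i \<in> I" and "\<forall>x\<in>B i. Q x"
      using \<open>eventually Q V\<close> by (rule has_base_eventuallyE[OF assms])
    then show "\<exists>i\<in>I. \<forall>z\<in>{z \<in> A. h z \<in> B i}. P z"
      using Q by blast
  next
    assume "\<exists>i\<in>I. \<forall>z\<in>{z \<in> A. h z \<in> B i}. P z"
    then obtain i where "i \<in> I" and P: "\<forall>z\<in>{z \<in> A. h z \<in> B i}. P z"
      by blast
    have "eventually (\<lambda>x. x \<in> B i) V"
      using \<open>i \<in> I\<close> by (rule has_base_eventuallyI[OF assms])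
    then show "\<exists>Q. eventually Q V \<and> (\<forall>z. Q (h z) \<longrightarrow> z \<in> A \<longrightarrow> P z)"
      using P by (intro exI[of _ "\<lambda>x. x \<in> B i"]) auto
  qed
  finally show "eventually P (inf (filtercomap h V) (principal A)) \<longleftrightarrow>
      (\<exists>i\<in>I. \<forall>z\<in>{z \<in> A. h z \<in> B i}. P z)" .
qed

lemma kernel_base_eq_comap:
  assumes U: "has_base U I (\<lambda>i. kernel_rel S (f i))"
    and V: "has_base V I (\<lambda>i. kernel_rel T (g i))"
    and "e ` S \<subseteq> T"
    and compat: "\<And>i x y. i \<in> I \<Longrightarrow> x \<in> S \<Longrightarrow> y \<in> S \<Longrightarrow> g i (e x) = g i (e y) \<longleftrightarrow> f i x = f i y"
  shows "U = inf (filtercomap (map_prod e e) V) (principal (S \<times> S))"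
proof (rule has_base_eq[OF U has_base_comap[OF V]])
  have "{z \<in> S \<times> S. map_prod e e z \<in> kernel_rel T (g i)} = kernel_rel S (f i)" if "i \<in> I" for i
    using compat[OF that] \<open>e ` S \<subseteq> T\<close> by (auto simp: image_subset_iff)
  then show "\<exists>j\<in>I. {z \<in> S \<times> S. map_prod e e z \<in> kernel_rel T (g j)} \<subseteq> kernel_rel S (f i)"
    and "\<exists>j\<in>I. kernel_rel S (f j) \<subseteq> {z \<in> S \<times> S. map_prod e e z \<in> kernel_rel T (g i)}"
    if "i \<in> I" for i
    using that by (intro bexI[of _ i]; simp)+
qed

lemma unif_dense_kernel_base:
  assumes V: "has_base V I (\<lambda>i. kernel_rel T (g i))" and "D \<subseteq> T"
    and dense: "\<And>i y. i \<in> I \<Longrightarrow> y \<in> T \<Longrightarrow> \<exists>d\<in>D. g i d = g i y"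
  shows "unif_dense T V D"
  unfolding unif_dense_def
proof (intro conjI ballI allI impI)
  fix y E assume "y \<in> T" and "eventually (\<lambda>z. z \<in> E) V"
  then obtain i where "i \<in> I" and sub: "\<forall>z\<in>kernel_rel T (g i). z \<in> E"
    by (auto elim: has_base_eventuallyE[OF V])
  then obtain d where "d \<in> D" "g i d = g i y"
    using dense \<open>y \<in> T\<close> by blast
  moreover from this have "(y, d) \<in> E"
    using sub \<open>y \<in> T\<close> \<open>D \<subseteq> T\<close> by auto
  ultimately show "\<exists>d\<in>D. (y, d) \<in> E"
    by blast
qed (rule \<open>D \<subseteq> T\<close>)

lemma is_completion_kernel_bases:
  assumes U: "has_base U I (\<lambda>i. kernel_rel S (f i))"
    and V: "has_base V I (\<lambda>i. kernel_rel T (g i))"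
    and "I \<noteq> {}" and "e ` S \<subseteq> T" and "inj_on e S"
    and compat: "\<And>i x y. i \<in> I \<Longrightarrow> x \<in> S \<Longrightarrow> y \<in> S \<Longrightarrow> g i (e x) = g i (e y) \<longleftrightarrow> f i x = f i y"
    and sep: "\<And>x y. x \<in> T \<Longrightarrow> y \<in> T \<Longrightarrow> x \<noteq> y \<Longrightarrow> \<exists>i\<in>I. g i x \<noteq> g i y"
    and "unif_complete T V"
    and dense: "\<And>i y. i \<in> I \<Longrightarrow> y \<in> T \<Longrightarrow> \<exists>x\<in>S. g i (e x) = g i y"
  shows "is_completion S U T V e"
proof -
  have "unif_dense T V (e ` S)"
    using dense by (intro unif_dense_kernel_base[OF V \<open>e ` S \<subseteq> T\<close>]) blast
  then show ?thesis
    unfolding is_completion_def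
    using is_uniformity_kernel_base[OF U \<open>I \<noteq> {}\<close>] is_uniformity_kernel_base[OF V \<open>I \<noteq> {}\<close>]
      unif_separated_kernel_base[OF V sep] kernel_base_eq_comap[OF U V \<open>e ` S \<subseteq> T\<close> compat]
      \<open>e ` S \<subseteq> T\<close> \<open>inj_on e S\<close> \<open>unif_complete T V\<close>
    by blast
qed

lemma unif_cauchy_eventually_fibre:
  assumes base: "has_base U I (\<lambda>i. kernel_rel S (f i))" and cauchy: "unif_cauchy S U F" and "i \<in> I"
  shows "\<exists>x. eventually (\<lambda>y. y \<in> S \<and> f i y = f i x) F"
proof -
  have "F \<noteq> bot"
    using cauchy by (simp add: unif_cauchy_def)
  have "eventually (\<lambda>z. z \<in> kernel_rel S (f i)) (F \<times>\<^sub>F F)"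
    using cauchy has_base_eventuallyI[OF base \<open>i \<in> I\<close>] by (simp add: unif_cauchy_def)
  then obtain Q where "eventually Q F" and Q: "\<And>x y. Q x \<Longrightarrow> Q y \<Longrightarrow> (x, y) \<in> kernel_rel S (f i)"
    unfolding eventually_prod_same by blast
  moreover obtain x where "Q x"
    using eventually_happens'[OF \<open>F \<noteq> bot\<close> \<open>eventually Q F\<close>] by blast
  have "eventually (\<lambda>y. y \<in> S \<and> f i y = f i x) F"
    using \<open>eventually Q F\<close>
  proof (rule eventually_mono)
    fix y assume "Q y"
    then show "y \<in> S \<and> f i y = f i x"
      using Q[OF \<open>Q x\<close>, of y] by simp
  qed
  then show ?thesis ..
qed

section \<open>Compact spaces with a base of open fibres\<close>

definition open_fibre_base :: "'b topology \<Rightarrow> 'i set \<Rightarrow> ('i \<Rightarrow> 'b \<Rightarrow> 'c) \<Rightarrow> bool" where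
  "open_fibre_base T I f \<longleftrightarrow> I \<noteq> {} \<and>
     (\<forall>i\<in>I. \<forall>j\<in>I. \<exists>k\<in>I. kernel_rel (topspace T) (f k)
        \<subseteq> kernel_rel (topspace T) (f i) \<inter> kernel_rel (topspace T) (f j)) \<and>
     (\<forall>i\<in>I. \<forall>x\<in>topspace T. openin T {y \<in> topspace T. f i y = f i x}) \<and>
     (\<forall>V x. openin T V \<longrightarrow> x \<in> V \<longrightarrow> (\<exists>i\<in>I. {y \<in> topspace T. f i y = f i x} \<subseteq> V))"

lemma
  assumes "open_fibre_base T I f"
  shows open_fibre_base_nonempty: "I \<noteq> {}"
    and open_fibre_base_directed: "\<And>i j. i \<in> I \<Longrightarrow> j \<in> I \<Longrightarrow> \<exists>k\<in>I. kernel_rel (topspace T) (f k)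
          \<subseteq> kernel_rel (topspace T) (f i) \<inter> kernel_rel (topspace T) (f j)"
    and openin_fibre: "\<And>i x. i \<in> I \<Longrightarrow> x \<in> topspace T \<Longrightarrow> openin T {y \<in> topspace T. f i y = f i x}"
    and fibre_subset_open: "\<And>V x. openin T V \<Longrightarrow> x \<in> V \<Longrightarrow> \<exists>i\<in>I. {y \<in> topspace T. f i y = f i x} \<subseteq> V"
  using assms unfolding open_fibre_base_def by blast+

lemma open_fibre_base_separating:
  assumes "t1_space T" and "open_fibre_base T I f"
    and "x \<in> topspace T" "y \<in> topspace T" "x \<noteq> y"
  shows "\<exists>i\<in>I. f i x \<noteq> f i y"
proof -
  obtain V where "openin T V" "x \<in> V" "y \<notin> V"
    using assms(1,3-5) unfolding t1_space_def by blast
  then obtain i where "i \<in> I" "{z \<in> topspace T. f i z = f i x} \<subseteq> V"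
    using fibre_subset_open[OF assms(2)] by blast
  then show ?thesis
    using \<open>y \<notin> V\<close> assms(4) by (intro bexI[of _ i]) auto
qed

lemma openin_kernel_rel:
  assumes "\<And>x. x \<in> topspace T \<Longrightarrow> openin T {y \<in> topspace T. g y = g x}"
  shows "openin (prod_topology T T) (kernel_rel (topspace T) g)"
  unfolding openin_prod_topology_alt
proof (intro allI impI)
  fix x y assume "(x, y) \<in> kernel_rel (topspace T) g"
  then show "\<exists>U V. openin T U \<and> openin T V \<and> x \<in> U \<and> y \<in> V \<and> U \<times> V \<subseteq> kernel_rel (topspace T) g"
    using assms by (intro exI[of _ "{z \<in> topspace T. g z = g x}"] exI[of _ "{z \<in> topspace T. g z = g y}"]) auto
qed

lemma closedin_open_fibre:
  assumes "\<And>x. x \<in> topspace T \<Longrightarrow> openin T {y \<in> topspace T. g y = g x}"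
  shows "closedin T {y \<in> topspace T. g y = c}"
  unfolding closedin_def
proof
  show "openin T (topspace T - {y \<in> topspace T. g y = c})"
  proof (subst openin_subopen, intro ballI)
    fix x assume "x \<in> topspace T - {y \<in> topspace T. g y = c}"
    then show "\<exists>N. openin T N \<and> x \<in> N \<and> N \<subseteq> topspace T - {y \<in> topspace T. g y = c}"
      using assms by (intro exI[of _ "{y \<in> topspace T. g y = g x}"]) auto
  qed
qed auto

lemma off_diagonal_box_disjoint_kernel:
  assumes "t1_space T" and B: "open_fibre_base T I f"
    and "x \<in> topspace T" "y \<in> topspace T" "x \<noteq> y"
  obtains i N where "i \<in> I" "openin (prod_topology T T) N" "(x, y) \<in> N"
    "N \<inter> kernel_rel (topspace T) (f i) = {}"
proof -
  obtain i where "i \<in> I" "f i x \<noteq> f i y"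
    using open_fibre_base_separating[OF assms] by blast
  let ?N = "{u \<in> topspace T. f i u = f i x} \<times> {v \<in> topspace T. f i v = f i y}"
  have "openin (prod_topology T T) ?N"
    using openin_fibre[OF B \<open>i \<in> I\<close>] assms(3,4) by (simp add: openin_prod_Times_iff)
  moreover have "?N \<inter> kernel_rel (topspace T) (f i) = {}"
    using \<open>f i x \<noteq> f i y\<close> by auto
  ultimately show ?thesis
    using \<open>i \<in> I\<close> assms(3,4) by (intro that) auto
qed

text \<open>The complement of \<open>W\<close> is compact and covered by open boxes each missing some
  kernel; a single kernel, below those of a finite subcover, misses it entirely.\<close>
lemma kernel_subset_open_diagonal_nbhd:
  assumes "compact_space T" and "t1_space T" and B: "open_fibre_base T I f"
    and W: "openin (prod_topology T T) W" "\<And>x. x \<in> topspace T \<Longrightarrow> (x, x) \<in> W"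
  shows "\<exists>i\<in>I. kernel_rel (topspace T) (f i) \<subseteq> W"
proof -
  let ?T2 = "prod_topology T T" and ?F = "INF i\<in>I. principal (kernel_rel (topspace T) (f i))"
  have base: "has_base ?F I (\<lambda>i. kernel_rel (topspace T) (f i))"
    using open_fibre_base_nonempty[OF B] open_fibre_base_directed[OF B] by (rule has_base_INF_principal)
  define \<U> where "\<U> = {N. openin ?T2 N \<and> eventually (\<lambda>z. z \<notin> N) ?F}"
  have cover: "topspace ?T2 - W \<subseteq> \<Union>\<U>"
  proof
    fix z assume "z \<in> topspace ?T2 - W"
    moreover obtain x y where "z = (x, y)"
      by (cases z)
    ultimately have "x \<in> topspace T" "y \<in> topspace T" "x \<noteq> y"
      using W(2) by auto
    then obtain i N where "i \<in> I" "openin ?T2 N" "(x, y) \<in> N" "N \<inter> kernel_rel (topspace T) (f i) = {}"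
      by (rule off_diagonal_box_disjoint_kernel[OF assms(2) B])
    moreover from this have "eventually (\<lambda>z. z \<notin> N) ?F"
      by (intro has_base_eventuallyI[OF base \<open>i \<in> I\<close>]) blast
    ultimately have "N \<in> \<U>" "z \<in> N"
      unfolding \<U>_def using \<open>z = (x, y)\<close> by simp_all
    then show "z \<in> \<Union>\<U>"
      by blast
  qed
  have "compactin ?T2 (topspace ?T2 - W)"
    using assms(1) closedin_diff[OF closedin_topspace W(1)]
    by (simp add: closedin_compact_space compact_space_prod_topology)
  moreover have "\<And>N. N \<in> \<U> \<Longrightarrow> openin ?T2 N"
    unfolding \<U>_def by blast
  ultimately obtain \<F> where \<F>: "finite \<F>" "\<F> \<subseteq> \<U>" "topspace ?T2 - W \<subseteq> \<Union>\<F>"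
    using compactinD cover by metis
  have "\<forall>N\<in>\<F>. eventually (\<lambda>z. z \<notin> N) ?F"
    using \<F>(2) unfolding \<U>_def by blast
  then have "eventually (\<lambda>z. \<forall>N\<in>\<F>. z \<notin> N) ?F"
    by (rule eventually_ball_finite[OF \<F>(1)])
  moreover obtain i0 where "i0 \<in> I"
    using open_fibre_base_nonempty[OF B] by blast
  then have "eventually (\<lambda>z. z \<in> topspace ?T2) ?F"
    by (rule has_base_eventuallyI[OF base]) auto
  ultimately have "eventually (\<lambda>z. z \<in> W) ?F"
    by eventually_elim (use \<F>(3) in blast)
  then show ?thesis
    by (rule has_base_eventuallyE[OF base]) blast
qed

lemma has_base_topo_unif_compact:
  assumes "compact_space T" and "t1_space T" and B: "open_fibre_base T I f"
  shows "has_base (topo_unif T) I (\<lambda>i. kernel_rel (topspace T) (f i))"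
proof -
  define \<W> where "\<W> = {W. openin (prod_topology T T) W \<and> (\<forall>x\<in>topspace T. (x, x) \<in> W)}"
  have W: "has_base (topo_unif T) \<W> (\<lambda>W. W)"
    unfolding topo_unif_def \<W>_def[symmetric]
  proof (rule has_base_INF_principal[where B = "\<lambda>W. W"])
    show "\<W> \<noteq> {}"
      using openin_topspace[of "prod_topology T T"] unfolding \<W>_def by force
    show "\<exists>W''\<in>\<W>. W'' \<subseteq> W \<inter> W'" if "W \<in> \<W>" "W' \<in> \<W>" for W W'
      using that unfolding \<W>_def by (intro bexI[of _ "W \<inter> W'"]) auto
  qed
  have kernel_in: "kernel_rel (topspace T) (f i) \<in> \<W>" if "i \<in> I" for i
    using openin_kernel_rel[OF openin_fibre[OF B that]] unfolding \<W>_def by auto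
  show ?thesis
    unfolding has_base_def
  proof (intro allI iffI)
    fix P assume "eventually P (topo_unif T)"
    then obtain W where "W \<in> \<W>" "\<forall>z\<in>W. P z"
      by (rule has_base_eventuallyE[OF W])
    moreover from \<open>W \<in> \<W>\<close> obtain i where "i \<in> I" "kernel_rel (topspace T) (f i) \<subseteq> W"
      using kernel_subset_open_diagonal_nbhd[OF assms] unfolding \<W>_def by blast
    ultimately show "\<exists>i\<in>I. \<forall>z\<in>kernel_rel (topspace T) (f i). P z"
      by blast
  next
    fix P assume "\<exists>i\<in>I. \<forall>z\<in>kernel_rel (topspace T) (f i). P z"
    then obtain i where "i \<in> I" "\<forall>z\<in>kernel_rel (topspace T) (f i). P z"
      by blast
    then show "eventually P (topo_unif T)"
      using has_base_eventuallyI[OF W kernel_in] by blast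
  qed
qed

lemma unif_induces_open_fibre_base:
  assumes base: "has_base U I (\<lambda>i. kernel_rel (topspace T) (f i))" and B: "open_fibre_base T I f"
  shows "unif_induces U T"
  unfolding unif_induces_def
proof (intro allI iffI conjI ballI)
  fix V x assume "openin T V" "x \<in> V"
  then obtain i where "i \<in> I" "{y \<in> topspace T. f i y = f i x} \<subseteq> V"
    using fibre_subset_open[OF B] by blast
  moreover have "eventually (\<lambda>z. z \<in> kernel_rel (topspace T) (f i)) U"
    using \<open>i \<in> I\<close> by (rule has_base_eventuallyI[OF base])
  ultimately show "\<exists>E. eventually (\<lambda>z. z \<in> E) U \<and> {y. (x, y) \<in> E} \<subseteq> V"
    by (intro exI[of _ "kernel_rel (topspace T) (f i)"]) auto
next
  fix V assume "openin T V"
  then show "V \<subseteq> topspace T"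
    by (rule openin_subset)
next
  fix V assume V: "V \<subseteq> topspace T \<and> (\<forall>x\<in>V. \<exists>E. eventually (\<lambda>z. z \<in> E) U \<and> {y. (x, y) \<in> E} \<subseteq> V)"
  show "openin T V"
  proof (subst openin_subopen, intro ballI)
    fix x assume "x \<in> V"
    then obtain E where ev_E: "eventually (\<lambda>z. z \<in> E) U" and E: "{y. (x, y) \<in> E} \<subseteq> V"
      using V by blast
    obtain i where "i \<in> I" and sub: "\<forall>z\<in>kernel_rel (topspace T) (f i). z \<in> E"
      using ev_E by (rule has_base_eventuallyE[OF base])
    have "x \<in> topspace T"
      using V \<open>x \<in> V\<close> by blast
    have "{y \<in> topspace T. f i y = f i x} \<subseteq> V"
      using sub E \<open>x \<in> topspace T\<close> by auto
    then show "\<exists>N. openin T N \<and> x \<in> N \<and> N \<subseteq> V"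
      using openin_fibre[OF B \<open>i \<in> I\<close> \<open>x \<in> topspace T\<close>] \<open>x \<in> topspace T\<close> by blast
  qed
qed

text \<open>A Cauchy filter eventually lies in one fibre of each map; these closed fibres have the
  finite intersection property, so compactness gives a common point, which is a limit.\<close>
lemma unif_complete_compact:
  assumes "compact_space T" and B: "open_fibre_base T I f"
    and base: "has_base U I (\<lambda>i. kernel_rel (topspace T) (f i))"
  shows "unif_complete (topspace T) U"
  unfolding unif_complete_def
proof (intro allI impI)
  fix F assume cauchy: "unif_cauchy (topspace T) U F"
  then have "F \<noteq> bot" and F_top: "eventually (\<lambda>y. y \<in> topspace T) F"
    by (auto simp: unif_cauchy_def le_principal)
  obtain x where x: "\<And>i. i \<in> I \<Longrightarrow> eventually (\<lambda>y. y \<in> topspace T \<and> f i y = f i (x i)) F"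
    using unif_cauchy_eventually_fibre[OF base cauchy] by metis
  define Z where "Z i = {y \<in> topspace T. f i y = f i (x i)}" for i
  let ?\<U> = "insert (topspace T) (Z ` I)"
  have ev_\<U>: "eventually (\<lambda>y. y \<in> C) F" if "C \<in> ?\<U>" for C
    using that F_top x unfolding Z_def by auto
  have "\<Inter>?\<U> \<noteq> {}"
  proof (rule assms(1)[unfolded compact_space_fip, rule_format], intro conjI allI impI ballI)
    fix C assume "C \<in> ?\<U>"
    then show "closedin T C"
      unfolding Z_def using closedin_open_fibre[OF openin_fibre[OF B]] closedin_topspace by blast
  next
    fix \<F> assume \<F>: "finite \<F> \<and> \<F> \<subseteq> ?\<U>"
    then have "\<forall>C\<in>\<F>. eventually (\<lambda>y. y \<in> C) F"
      using ev_\<U> by blast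
    then have "eventually (\<lambda>y. \<forall>C\<in>\<F>. y \<in> C) F"
      using \<F> by (intro eventually_ball_finite) auto
    then show "\<Inter>\<F> \<noteq> {}"
      using eventually_happens'[OF \<open>F \<noteq> bot\<close>] by blast
  qed
  then obtain c where c: "c \<in> topspace T" "\<And>i. i \<in> I \<Longrightarrow> c \<in> Z i"
    by blast
  have "unif_converges U F c"
    unfolding unif_converges_def
  proof (intro allI impI)
    fix E assume "eventually (\<lambda>z. z \<in> E) U"
    then obtain i where "i \<in> I" and sub: "\<forall>z\<in>kernel_rel (topspace T) (f i). z \<in> E"
      by (rule has_base_eventuallyE[OF base])
    show "eventually (\<lambda>y. (c, y) \<in> E) F"
      using x[OF \<open>i \<in> I\<close>] by eventually_elim (use c \<open>i \<in> I\<close> sub in \<open>auto simp: Z_def\<close>)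
  qed
  then show "\<exists>x\<in>topspace T. unif_converges U F x"
    using c(1) by blast
qed

lemma in_closure_of_open_fibre_base:
  assumes "open_fibre_base T I f"
  shows "x \<in> T closure_of S \<longleftrightarrow> x \<in> topspace T \<and> (\<forall>i\<in>I. \<exists>y\<in>S \<inter> topspace T. f i y = f i x)"
proof
  assume x: "x \<in> T closure_of S"
  then have "x \<in> topspace T"
    by (simp add: in_closure_of)
  moreover have "\<exists>y\<in>S \<inter> topspace T. f i y = f i x" if "i \<in> I" for i
  proof -
    have closure: "\<forall>V. x \<in> V \<and> openin T V \<longrightarrow> (\<exists>y. y \<in> S \<and> y \<in> V)"
      using x by (simp add: in_closure_of)
    have "openin T {y \<in> topspace T. f i y = f i x}"
      by (rule openin_fibre[OF assms that \<open>x \<in> topspace T\<close>])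
    then have "\<exists>y. y \<in> S \<and> y \<in> {y \<in> topspace T. f i y = f i x}"
      using closure[rule_format, of "{y \<in> topspace T. f i y = f i x}"] \<open>x \<in> topspace T\<close> by simp
    then show ?thesis
      by auto
  qed
  ultimately show "x \<in> topspace T \<and> (\<forall>i\<in>I. \<exists>y\<in>S \<inter> topspace T. f i y = f i x)"
    by blast
next
  assume x: "x \<in> topspace T \<and> (\<forall>i\<in>I. \<exists>y\<in>S \<inter> topspace T. f i y = f i x)"
  show "x \<in> T closure_of S"
    unfolding in_closure_of
  proof (intro conjI allI impI)
    fix V assume "x \<in> V \<and> openin T V"
    then obtain i where "i \<in> I" "{y \<in> topspace T. f i y = f i x} \<subseteq> V"
      using fibre_subset_open[OF assms] by blast
    then show "\<exists>y. y \<in> S \<and> y \<in> V"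
      using x by blast
  qed (use x in blast)
qed

lemma open_fibre_base_subtopology:
  assumes "open_fibre_base T I f"
  shows "open_fibre_base (subtopology T K) I f"
  unfolding open_fibre_base_def topspace_subtopology
proof (intro conjI ballI allI impI)
  show "I \<noteq> {}"
    by (rule open_fibre_base_nonempty[OF assms])
next
  fix i j assume "i \<in> I" "j \<in> I"
  then obtain k where "k \<in> I" and k: "kernel_rel (topspace T) (f k)
      \<subseteq> kernel_rel (topspace T) (f i) \<inter> kernel_rel (topspace T) (f j)"
    using open_fibre_base_directed[OF assms] by blast
  have "kernel_rel (topspace T \<inter> K) (f k)
      \<subseteq> kernel_rel (topspace T \<inter> K) (f i) \<inter> kernel_rel (topspace T \<inter> K) (f j)"
  proof
    fix z assume z: "z \<in> kernel_rel (topspace T \<inter> K) (f k)"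
    then have "z \<in> kernel_rel (topspace T) (f k)"
      by (cases z) simp
    then have "z \<in> kernel_rel (topspace T) (f i)" "z \<in> kernel_rel (topspace T) (f j)"
      using k by blast+
    then show "z \<in> kernel_rel (topspace T \<inter> K) (f i) \<inter> kernel_rel (topspace T \<inter> K) (f j)"
      using z by (cases z) simp
  qed
  then show "\<exists>k\<in>I. kernel_rel (topspace T \<inter> K) (f k)
      \<subseteq> kernel_rel (topspace T \<inter> K) (f i) \<inter> kernel_rel (topspace T \<inter> K) (f j)"
    using \<open>k \<in> I\<close> by blast
next
  fix i x assume "i \<in> I" "x \<in> topspace T \<inter> K"
  then have "openin (subtopology T K) ({y \<in> topspace T. f i y = f i x} \<inter> K)"
    by (intro openin_subtopology_Int openin_fibre[OF assms]) simp_all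
  moreover have "{y \<in> topspace T \<inter> K. f i y = f i x} = {y \<in> topspace T. f i y = f i x} \<inter> K"
    by blast
  ultimately show "openin (subtopology T K) {y \<in> topspace T \<inter> K. f i y = f i x}"
    by simp
next
  fix V x assume "openin (subtopology T K) V" "x \<in> V"
  then obtain W where "openin T W" "V = W \<inter> K"
    by (auto simp: openin_subtopology)
  moreover obtain i where "i \<in> I" "{y \<in> topspace T. f i y = f i x} \<subseteq> W"
    using fibre_subset_open[OF assms \<open>openin T W\<close>] \<open>x \<in> V\<close> \<open>V = W \<inter> K\<close> by blast
  ultimately show "\<exists>i\<in>I. {y \<in> topspace T \<inter> K. f i y = f i x} \<subseteq> V"
    by blast
qed

section \<open>Partitions by finite sets\<close>

definition cell :: "'b set \<Rightarrow> 'b \<Rightarrow> 'b option" where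
  "cell A x = (if x \<in> A then Some x else None)"

lemma cell_eq_iff: "cell A x = cell A y \<longleftrightarrow> x = y \<or> x \<notin> A \<and> y \<notin> A"
  by (auto simp: cell_def)

lemma cell_eq_mono: "A \<subseteq> B \<Longrightarrow> cell B x = cell B y \<Longrightarrow> cell A x = cell A y"
  by (auto simp: cell_eq_iff)

lemma cell_Some_eq_iff: "cell (Some ` A) (Some x) = cell (Some ` A) (Some y) \<longleftrightarrow> cell A x = cell A y"
  by (auto simp: cell_eq_iff)

lemma finite_range_cell: "finite A \<Longrightarrow> finite (range (cell A))"
  by (rule finite_subset[of _ "insert None (Some ` A)"]) (auto simp: cell_def)

definition cell_restrict :: "'a set \<Rightarrow> 'b set \<Rightarrow> ('a \<Rightarrow> 'b) \<Rightarrow> 'a \<Rightarrow> 'b option" where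
  "cell_restrict P B f = restrict (cell B \<circ> f) P"

lemma cell_restrict_eq_iff:
  "cell_restrict P B f = cell_restrict P B g \<longleftrightarrow> (\<forall>x\<in>P. cell B (f x) = cell B (g x))"
  by (auto simp: cell_restrict_def fun_eq_iff)

lemma cell_restrict_eq_mono:
  "P \<subseteq> P' \<Longrightarrow> B \<subseteq> B' \<Longrightarrow> cell_restrict P' B' f = cell_restrict P' B' g \<Longrightarrow>
    cell_restrict P B f = cell_restrict P B g"
  unfolding cell_restrict_eq_iff by (meson cell_eq_mono subsetD)

lemma finite_image_cell_restrict:
  assumes "finite P" and "finite B"
  shows "finite (cell_restrict P B ` S)"
proof (rule finite_subset)
  show "cell_restrict P B ` S \<subseteq> PiE P (\<lambda>_. insert None (Some ` B))"
    by (auto simp: cell_restrict_def cell_def)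
  show "finite (PiE P (\<lambda>_. insert None (Some ` B)))"
    using assms by (simp add: finite_PiE)
qed

section \<open>The Alexandroff compactification\<close>

lemma openin_alphaX: "openin alphaX U \<longleftrightarrow> (None \<in> U \<longrightarrow> finite (- U))"
proof -
  have "istopology (\<lambda>U::'a option set. None \<in> U \<longrightarrow> finite (- U))"
    unfolding istopology_def
  proof (intro conjI allI impI)
    fix \<K> :: "'a option set set" assume "\<forall>U\<in>\<K>. None \<in> U \<longrightarrow> finite (- U)" "None \<in> \<Union>\<K>"
    then obtain U where "U \<in> \<K>" "finite (- U)"
      by blast
    moreover from \<open>U \<in> \<K>\<close> have "- \<Union>\<K> \<subseteq> - U"
      by blast
    ultimately show "finite (- \<Union>\<K>)"
      using finite_subset by blast
  qed auto
  then show ?thesis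
    unfolding alphaX_def by (simp add: topology_inverse')
qed

lemma topspace_alphaX [simp]: "topspace alphaX = UNIV"
  using openin_subset[of alphaX UNIV] by (simp add: openin_alphaX top.extremum_unique)

lemma t1_space_alphaX: "t1_space alphaX"
  unfolding t1_space_def openin_alphaX by (intro ballI impI exI[of _ "- {y}" for y]) auto

lemma compact_space_alphaX: "compact_space alphaX"
  unfolding compact_space_alt topspace_alphaX
proof (intro allI impI)
  fix \<U> :: "'a option set set"
  assume \<U>: "(\<forall>U\<in>\<U>. openin alphaX U) \<and> UNIV \<subseteq> \<Union>\<U>"
  then obtain U0 where "U0 \<in> \<U>" "None \<in> U0"
    by blast
  then have "finite (- U0)"
    using \<U> by (auto simp: openin_alphaX)
  have "\<forall>u. \<exists>U. U \<in> \<U> \<and> u \<in> U"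
    using \<U> by blast
  then obtain V where V: "\<forall>u. V u \<in> \<U> \<and> u \<in> V u"
    by metis
  show "\<exists>\<F>. finite \<F> \<and> \<F> \<subseteq> \<U> \<and> UNIV \<subseteq> \<Union>\<F>"
  proof (intro exI conjI)
    show "finite (insert U0 (V ` (- U0)))"
      using \<open>finite (- U0)\<close> by simp
    show "insert U0 (V ` (- U0)) \<subseteq> \<U>"
      using V \<open>U0 \<in> \<U>\<close> by auto
    show "UNIV \<subseteq> \<Union> (insert U0 (V ` (- U0)))"
      using V by blast
  qed
qed

lemma open_fibre_base_alphaX: "open_fibre_base alphaX {C. finite C} (\<lambda>C. cell (Some ` C))"
  unfolding open_fibre_base_def topspace_alphaX
proof (intro conjI ballI allI impI)
  fix C C' :: "'a set"
  show "\<exists>k\<in>{C. finite C}. kernel_rel UNIV (cell (Some ` k))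
      \<subseteq> kernel_rel UNIV (cell (Some ` C)) \<inter> kernel_rel UNIV (cell (Some ` C'))"
    if "C \<in> {C. finite C}" "C' \<in> {C. finite C}"
    using that cell_eq_mono[OF image_mono[OF Un_upper1]] cell_eq_mono[OF image_mono[OF Un_upper2]]
    by (intro bexI[of _ "C \<union> C'"]) auto
next
  fix C :: "'a set" and u assume "C \<in> {C. finite C}"
  show "openin alphaX {v \<in> UNIV. cell (Some ` C) v = cell (Some ` C) u}"
  proof (unfold openin_alphaX, intro impI)
    assume "None \<in> {v \<in> UNIV. cell (Some ` C) v = cell (Some ` C) u}"
    then have "- {v \<in> UNIV. cell (Some ` C) v = cell (Some ` C) u} \<subseteq> Some ` C"
      by (auto simp: cell_def split: if_splits)
    moreover have "finite (Some ` C)"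
      using \<open>C \<in> {C. finite C}\<close> by simp
    ultimately show "finite (- {v \<in> UNIV. cell (Some ` C) v = cell (Some ` C) u})"
      by (rule finite_subset)
  qed
next
  fix V u assume "openin alphaX V" "u \<in> V"
  show "\<exists>C\<in>{C. finite C}. {v \<in> UNIV. cell (Some ` C) v = cell (Some ` C) u} \<subseteq> V"
  proof (cases u)
    case None
    then have "finite (Some -` (- V))"
      using \<open>openin alphaX V\<close> \<open>u \<in> V\<close> by (simp add: openin_alphaX finite_vimageI)
    moreover have "{v. cell (Some ` Some -` (- V)) v = cell (Some ` Some -` (- V)) u} \<subseteq> V"
      using None \<open>u \<in> V\<close> by (auto simp: cell_def notin_range_Some split: if_splits)
    ultimately show ?thesis
      by blast
  next
    case (Some a)
    then have "{v. cell (Some ` {a}) v = cell (Some ` {a}) u} \<subseteq> V"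
      using \<open>u \<in> V\<close> by (auto simp: cell_def split: if_splits)
    then show ?thesis
      by blast
  qed
qed (use finite.emptyI in blast)

lemma has_base_topo_unif_alphaX:
  "has_base (topo_unif alphaX) {C. finite C} (\<lambda>C. kernel_rel UNIV (cell (Some ` C)))"
  using has_base_topo_unif_compact[OF compact_space_alphaX t1_space_alphaX open_fibre_base_alphaX]
  by simp

lemma unif_induces_alphaX: "unif_induces (topo_unif alphaX) alphaX"
  using has_base_topo_unif_alphaX open_fibre_base_alphaX
  by (intro unif_induces_open_fibre_base) simp_all

text \<open>The point at infinity is approximated by the points outside any finite set, so only
  here is the infiniteness of \<open>X\<close> needed.\<close>
lemma alphaX_completion:
  assumes "infinite (UNIV :: 'a set)"
    and base: "has_base U {A. finite A} (\<lambda>A. kernel_rel (UNIV :: 'a set) (cell A))"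
  shows "is_completion UNIV U UNIV (topo_unif alphaX) Some"
proof (rule is_completion_kernel_bases[OF base has_base_topo_unif_alphaX])
  show "{C. finite C} \<noteq> {}"
    using finite.emptyI by blast
  show "Some ` UNIV \<subseteq> UNIV" and "inj_on Some UNIV"
    by simp_all
  show "cell (Some ` C) (Some x) = cell (Some ` C) (Some y) \<longleftrightarrow> cell C x = cell C y" for C x y
    by (rule cell_Some_eq_iff)
  show "unif_complete UNIV (topo_unif alphaX :: ('a option \<times> 'a option) filter)"
    using unif_complete_compact[OF compact_space_alphaX open_fibre_base_alphaX] has_base_topo_unif_alphaX
    by simp
  show "\<exists>C\<in>{C. finite C}. cell (Some ` C) u \<noteq> cell (Some ` C) v" if "u \<noteq> v" for u v :: "'a option"
    by (rule open_fibre_base_separating[OF t1_space_alphaX open_fibre_base_alphaX]) (simp_all add: that)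
  show "\<exists>x\<in>UNIV. cell (Some ` C) (Some x) = cell (Some ` C) v" if C: "C \<in> {C. finite C}" for C and v :: "'a option"
  proof (cases v)
    case None
    obtain x where "x \<notin> C"
      using ex_new_if_finite[OF assms(1)] C by auto
    then show ?thesis
      using None by (auto simp: cell_def)
  next
    case (Some a)
    then show ?thesis
      by blast
  qed
qed

section \<open>Ultratransitive permutation groups\<close>

lemma perm_group_bij: "is_perm_group G \<Longrightarrow> g \<in> G \<Longrightarrow> bij g"
  by (auto simp: is_perm_group_def perms_def)

lemma perm_group_comp: "is_perm_group G \<Longrightarrow> f \<in> G \<Longrightarrow> g \<in> G \<Longrightarrow> f \<circ> g \<in> G"
  and perm_group_inv: "is_perm_group G \<Longrightarrow> f \<in> G \<Longrightarrow> inv f \<in> G"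
  by (simp_all add: is_perm_group_def)

lemma ultratransitive_extend:
  assumes "ultratransitive G" and "finite P" and "inj_on \<phi> P"
  shows "\<exists>g\<in>G. \<forall>x\<in>P. g x = \<phi> x"
proof -
  obtain xs where xs: "set xs = P" "distinct xs"
    using finite_distinct_list[OF assms(2)] by blast
  have "distinct (map \<phi> xs)"
    using xs assms(3) by (simp add: distinct_map)
  then obtain g where "g \<in> G" "map g xs = map \<phi> xs"
    using assms(1)[unfolded ultratransitive_def, rule_format, of xs "map \<phi> xs"] xs(2) by auto
  then show ?thesis
    using xs(1) by (metis map_eq_conv)
qed

lemma is_perm_group_perms: "is_perm_group perms"
  unfolding is_perm_group_def perms_def by (auto intro: bij_comp bij_imp_bij_inv)

lemma ultratransitive_perms: "ultratransitive perms"
  unfolding ultratransitive_def perms_def mem_Collect_eq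
proof (intro allI impI)
  fix xs ys :: "'a list"
  assume "distinct xs \<and> distinct ys \<and> length xs = length ys"
  then show "\<exists>g\<in>{g. bij g}. map g xs = ys"
  proof (induction xs arbitrary: ys)
    case Nil
    then show ?case
      using bij_id by auto
  next
    case (Cons x xs)
    then obtain y ys' where ys: "ys = y # ys'"
      by (cases ys) auto
    with Cons obtain g where g: "bij g" "map g xs = ys'"
      by auto
    define t where "t = Transposition.transpose (g x) y"
    have "g x \<notin> set ys'"
      using Cons.prems g(1) by (simp add: g(2)[symmetric] bij_is_inj inj_image_mem_iff)
    moreover have "y \<notin> set ys'"
      using Cons.prems ys by simp
    ultimately have "t z = z" if "z \<in> set ys'" for z
      using that unfolding t_def by (metis transpose_apply_other)
    then have "map (t \<circ> g) xs = ys'"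
      using g(2) by (auto intro: map_idI)
    moreover have "bij (t \<circ> g)"
      using g(1) by (simp add: t_def bij_comp)
    ultimately show ?case
      using ys by (auto simp: t_def)
  qed
qed

lemma stab_antimono: "A \<subseteq> B \<Longrightarrow> stab G B \<subseteq> stab G A"
  unfolding stab_def by blast

lemma stab_orbit_rel_eq:
  assumes "is_perm_group G" and "ultratransitive G" and "finite A"
  shows "{(x, y). \<exists>g\<in>stab G A. g x = y} = kernel_rel UNIV (cell A)"
proof
  show "{(x, y). \<exists>g\<in>stab G A. g x = y} \<subseteq> kernel_rel UNIV (cell A)"
  proof
    fix z assume "z \<in> {(x, y). \<exists>g\<in>stab G A. g x = y}"
    then obtain x g where z: "z = (x, g x)" and "g \<in> stab G A"
      by blast
    then have "inj g" and g_fix: "\<forall>a\<in>A. g a = a"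
      using perm_group_bij[OF assms(1)] by (auto simp: stab_def bij_def)
    then have "g x \<in> A \<longleftrightarrow> x \<in> A"
      by (metis injD)
    then show "z \<in> kernel_rel UNIV (cell A)"
      using g_fix z by (auto simp: cell_def)
  qed
next
  show "kernel_rel UNIV (cell A) \<subseteq> {(x, y). \<exists>g\<in>stab G A. g x = y}"
  proof
    fix z assume "z \<in> kernel_rel UNIV (cell A)"
    then obtain x y where z: "z = (x, y)" and "cell A x = cell A y"
      by (cases z) auto
    then consider "x = y" | "x \<notin> A" "y \<notin> A"
      by (auto simp: cell_eq_iff)
    then have "\<exists>g\<in>stab G A. g x = y"
    proof cases
      case 1
      then show ?thesis
        using assms(1) by (intro bexI[of _ id]) (auto simp: stab_def is_perm_group_def)
    next
      case 2
      have "inj_on (id(x := y)) (insert x A)"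
        using 2 by (auto simp: inj_on_def)
      then obtain g where "g \<in> G" "\<forall>a\<in>insert x A. g a = (id(x := y)) a"
        using ultratransitive_extend[OF assms(2) finite.insertI[OF assms(3)]] by blast
      then show ?thesis
        using 2 by (intro bexI[of _ g]) (auto simp: stab_def)
    qed
    then show "z \<in> {(x, y). \<exists>g\<in>stab G A. g x = y}"
      using z by blast
  qed
qed

lemma has_base_UX:
  assumes "is_perm_group G" and "ultratransitive G"
  shows "has_base (UX G) {A. finite A} (\<lambda>A. kernel_rel UNIV (cell A))"
proof -
  have "UX G = (INF A\<in>{A. finite A}. principal (kernel_rel UNIV (cell A)))"
    unfolding UX_def by (rule INF_cong[OF refl]) (simp add: stab_orbit_rel_eq[OF assms])
  also have "has_base \<dots> {A. finite A} (\<lambda>A. kernel_rel UNIV (cell A))"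
  proof (rule has_base_INF_finite_antimono)
    fix A A' :: "'a set" assume "A \<subseteq> A'"
    then show "kernel_rel UNIV (cell A') \<subseteq> kernel_rel UNIV (cell A)"
      by (intro kernel_rel_subset cell_eq_mono[OF \<open>A \<subseteq> A'\<close>])
  qed
  finally show ?thesis .
qed

section \<open>The Roelcke uniformity\<close>

definition left_ent :: "('a \<Rightarrow> 'a) set \<Rightarrow> 'a set \<Rightarrow> (('a \<Rightarrow> 'a) \<times> ('a \<Rightarrow> 'a)) set" where
  "left_ent G A = {(g, h). g \<in> G \<and> h \<in> G \<and> inv g \<circ> h \<in> stab G A}"

definition right_ent :: "('a \<Rightarrow> 'a) set \<Rightarrow> 'a set \<Rightarrow> (('a \<Rightarrow> 'a) \<times> ('a \<Rightarrow> 'a)) set" where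
  "right_ent G A = {(g, h). g \<in> G \<and> h \<in> G \<and> h \<circ> inv g \<in> stab G A}"

lemma left_ent_antimono: "A \<subseteq> B \<Longrightarrow> left_ent G B \<subseteq> left_ent G A"
  and right_ent_antimono: "A \<subseteq> B \<Longrightarrow> right_ent G B \<subseteq> right_ent G A"
  unfolding left_ent_def right_ent_def using stab_antimono by blast+

lemma has_base_left_unif: "has_base (left_unif G) {A. finite A} (left_ent G)"
  and has_base_right_unif: "has_base (right_unif G) {A. finite A} (right_ent G)"
proof -
  have "left_unif G = (INF A\<in>{A. finite A}. principal (left_ent G A))"
    and "right_unif G = (INF A\<in>{A. finite A}. principal (right_ent G A))"
    by (simp_all add: left_unif_def left_ent_def right_unif_def right_ent_def)
  then show "has_base (left_unif G) {A. finite A} (left_ent G)"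
    and "has_base (right_unif G) {A. finite A} (right_ent G)"
    using has_base_INF_finite_antimono[OF left_ent_antimono]
      has_base_INF_finite_antimono[OF right_ent_antimono] by simp_all
qed

lemma left_ent_subset_kernel:
  assumes "is_perm_group G"
  shows "left_ent G C \<subseteq> kernel_rel G (cell_restrict C C)"
proof
  fix z assume "z \<in> left_ent G C"
  then obtain g h where z: "z = (g, h)" "g \<in> G" "h \<in> G" and g_h: "\<forall>c\<in>C. inv g (h c) = c"
    by (auto simp: left_ent_def stab_def)
  have "h c = g c" if "c \<in> C" for c
    using g_h that perm_group_bij[OF assms \<open>g \<in> G\<close>] by (metis bij_inv_eq_iff)
  then show "z \<in> kernel_rel G (cell_restrict C C)"
    using z by (simp add: cell_restrict_eq_iff)
qed

lemma right_ent_subset_kernel: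
  assumes "is_perm_group G"
  shows "right_ent G C \<subseteq> kernel_rel G (cell_restrict C C)"
proof
  fix z assume "z \<in> right_ent G C"
  then obtain g h where z: "z = (g, h)" "g \<in> G" "h \<in> G" and h_g: "\<forall>c\<in>C. h (inv g c) = c"
    by (auto simp: right_ent_def stab_def)
  have bij: "bij g" "bij h"
    using perm_group_bij[OF assms] z by simp_all
  have "cell C (g c) = cell C (h c)" if "c \<in> C" for c
  proof (cases "g c \<in> C \<or> h c \<in> C")
    case True
    then have "h c = g c"
    proof
      assume "g c \<in> C"
      then show "h c = g c"
        using h_g bij(1) by (metis bij_is_inj inv_f_f)
    next
      assume "h c \<in> C"
      then have "inv g (h c) = c"
        using h_g bij(2) by (metis bij_is_inj injD)
      then show "h c = g c"
        using bij(1) by (metis bij_inv_eq_iff)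
    qed
    then show ?thesis
      by simp
  next
    case False
    then show ?thesis
      by (simp add: cell_def)
  qed
  then show "z \<in> kernel_rel G (cell_restrict C C)"
    using z by (simp add: cell_restrict_eq_iff)
qed

text \<open>The element of \<open>G\<close> factorising a Roelcke entourage must agree with \<open>h1\<close> on \<open>C\<close> and
  with \<open>h2\<close> on \<open>h2\<inverse>(C)\<close>; these requirements are compatible and injective.\<close>
lemma roelcke_interpolant:
  assumes "inj h1" and "bij h2" and agree: "\<forall>c\<in>C. cell C (h1 c) = cell C (h2 c)"
  defines "\<phi> \<equiv> \<lambda>x. if x \<in> C then h1 x else h2 x"
  shows "inj_on \<phi> (C \<union> inv h2 ` C)" and "\<And>c. c \<in> C \<Longrightarrow> \<phi> (inv h2 c) = c"
proof -
  have h2_inv: "h2 (inv h2 c) = c" for c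
    using assms(2) by (simp add: bij_is_surj surj_f_inv_f)
  have into_C: "\<phi> x = h2 x" if "\<phi> x \<in> C" for x
    using that agree by (auto simp: \<phi>_def cell_def split: if_splits)
  have out_of_C: "\<phi> x = h1 x" if "x \<in> C \<union> inv h2 ` C" "\<phi> x \<notin> C" for x
    using that h2_inv by (auto simp: \<phi>_def)
  show "inj_on \<phi> (C \<union> inv h2 ` C)"
  proof (rule inj_onI)
    fix x y assume xy: "x \<in> C \<union> inv h2 ` C" "y \<in> C \<union> inv h2 ` C" "\<phi> x = \<phi> y"
    show "x = y"
    proof (cases "\<phi> x \<in> C")
      case True
      then have "h2 x = h2 y"
        using into_C[of x] into_C[of y] xy(3) by simp
      then show ?thesis
        using bij_is_inj[OF assms(2)] by (simp add: inj_eq)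
    next
      case False
      then have "h1 x = h1 y"
        using out_of_C[OF xy(1)] out_of_C[OF xy(2)] xy(3) by simp
      then show ?thesis
        using assms(1) by (simp add: inj_eq)
    qed
  qed
  show "\<phi> (inv h2 c) = c" if "c \<in> C" for c
  proof (cases "inv h2 c \<in> C")
    case True
    then have "cell C (h1 (inv h2 c)) = cell C c"
      using bspec[OF agree True] h2_inv by simp
    then show ?thesis
      using True that by (simp add: \<phi>_def cell_def split: if_splits)
  next
    case False
    then show ?thesis
      using h2_inv by (simp add: \<phi>_def)
  qed
qed

lemma kernel_subset_left_right:
  assumes G: "is_perm_group G" and "ultratransitive G" and "finite C"
  shows "kernel_rel G (cell_restrict C C) \<subseteq> left_ent G C O right_ent G C"
proof
  fix z assume "z \<in> kernel_rel G (cell_restrict C C)"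
  then obtain h1 h2 where z: "z = (h1, h2)" "h1 \<in> G" "h2 \<in> G"
    and agree: "\<forall>c\<in>C. cell C (h1 c) = cell C (h2 c)"
    by (cases z) (auto simp: cell_restrict_eq_iff)
  have b1: "bij h1" and b2: "bij h2"
    using perm_group_bij[OF G] z by simp_all
  note interpolant = roelcke_interpolant[OF bij_is_inj[OF b1] b2 agree]
  obtain y where "y \<in> G" and y: "\<forall>x\<in>C \<union> inv h2 ` C. y x = (if x \<in> C then h1 x else h2 x)"
    using ultratransitive_extend[OF assms(2) _ interpolant(1)] \<open>finite C\<close> by blast
  have y_inv: "y (inv h2 c) = c" if "c \<in> C" for c
  proof -
    have "inv h2 c \<in> C \<union> inv h2 ` C"
      using that by blast
    then show ?thesis
      using bspec[OF y] interpolant(2)[OF that] by simp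
  qed
  have "inv h1 \<circ> y \<in> stab G C"
    using y perm_group_comp[OF G perm_group_inv[OF G z(2)] \<open>y \<in> G\<close>] b1
    by (simp add: stab_def bij_is_inj inv_f_f)
  moreover have "h2 \<circ> inv y \<in> stab G C"
    using y_inv perm_group_comp[OF G z(3) perm_group_inv[OF G \<open>y \<in> G\<close>]]
      perm_group_bij[OF G \<open>y \<in> G\<close>] b2
    by (simp add: stab_def bij_is_surj surj_f_inv_f) (metis bij_inv_eq_iff)
  ultimately show "z \<in> left_ent G C O right_ent G C"
    using z \<open>y \<in> G\<close> unfolding left_ent_def right_ent_def by blast
qed

lemma has_base_INF_roelcke_kernel:
  "has_base (INF C\<in>{C. finite C}. principal (kernel_rel G (cell_restrict C C))) {C. finite C}
     (\<lambda>C. kernel_rel G (cell_restrict C C))"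
proof (rule has_base_INF_finite_antimono)
  fix C C' :: "'a set" assume "C \<subseteq> C'"
  then show "kernel_rel G (cell_restrict C' C') \<subseteq> kernel_rel G (cell_restrict C C)"
    by (intro kernel_rel_subset cell_restrict_eq_mono[of C C' C C'])
qed

lemma roelcke_kernel_le_uniformity:
  assumes "is_perm_group G" and "ultratransitive G"
    and U: "is_uniformity G U" "left_unif G \<le> U" "right_unif G \<le> U"
  shows "(INF C\<in>{C. finite C}. principal (kernel_rel G (cell_restrict C C))) \<le> U"
proof (rule filter_leI)
  fix P assume "eventually P U"
  then have "eventually (\<lambda>z. z \<in> {z. P z}) U"
    by simp
  then obtain D where D: "eventually (\<lambda>z. z \<in> D) U" "D O D \<subseteq> {z. P z}"
    using U(1) unfolding is_uniformity_def by blast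
  obtain A where "finite A" and A: "\<forall>z\<in>left_ent G A. z \<in> D"
    using filter_leD[OF U(2) D(1)] by (auto elim: has_base_eventuallyE[OF has_base_left_unif])
  obtain B where "finite B" and B: "\<forall>z\<in>right_ent G B. z \<in> D"
    using filter_leD[OF U(3) D(1)] by (auto elim: has_base_eventuallyE[OF has_base_right_unif])
  have "kernel_rel G (cell_restrict (A \<union> B) (A \<union> B)) \<subseteq> left_ent G (A \<union> B) O right_ent G (A \<union> B)"
    using \<open>finite A\<close> \<open>finite B\<close> by (intro kernel_subset_left_right assms(1,2)) simp
  also have "\<dots> \<subseteq> left_ent G A O right_ent G B"
    by (intro relcomp_mono left_ent_antimono right_ent_antimono) simp_all
  also have "\<dots> \<subseteq> D O D"
    using A B by (intro relcomp_mono) auto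
  also have "\<dots> \<subseteq> {z. P z}"
    by (rule D(2))
  finally show "eventually P (INF C\<in>{C. finite C}. principal (kernel_rel G (cell_restrict C C)))"
    using \<open>finite A\<close> \<open>finite B\<close> by (intro has_base_eventuallyI[OF has_base_INF_roelcke_kernel, of "A \<union> B"]) auto
qed

lemma has_base_roelcke_unif:
  assumes "is_perm_group G" and "ultratransitive G"
  shows "has_base (roelcke_unif G) {C. finite C} (\<lambda>C. kernel_rel G (cell_restrict C C))"
proof -
  let ?R = "INF C\<in>{C. finite C}. principal (kernel_rel G (cell_restrict C C))"
  have "is_uniformity G ?R"
    by (rule is_uniformity_kernel_base[OF has_base_INF_roelcke_kernel]) blast
  moreover have "left_unif G \<le> ?R"
    by (rule has_base_le[OF has_base_INF_roelcke_kernel has_base_left_unif])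
      (use left_ent_subset_kernel[OF assms(1)] in blast)
  moreover have "right_unif G \<le> ?R"
    by (rule has_base_le[OF has_base_INF_roelcke_kernel has_base_right_unif])
      (use right_ent_subset_kernel[OF assms(1)] in blast)
  ultimately have "?R \<in> {U. is_uniformity G U \<and> left_unif G \<le> U \<and> right_unif G \<le> U}"
    by blast
  then have "roelcke_unif G = ?R"
    unfolding roelcke_unif_def
    by (rule antisym[OF Inf_lower Inf_greatest]) (auto intro: roelcke_kernel_le_uniformity[OF assms])
  then show ?thesis
    using has_base_INF_roelcke_kernel by simp
qed

definition cover_ent :: "('a \<Rightarrow> 'a) set \<Rightarrow> 'a set \<Rightarrow> ('a \<times> 'a) set \<Rightarrow> (('a \<Rightarrow> 'a) \<times> ('a \<Rightarrow> 'a)) set" where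
  "cover_ent G A E = (\<Union>g\<in>G. {h\<in>G. \<forall>x\<in>A. (g x, h x) \<in> E} \<times> {h\<in>G. \<forall>x\<in>A. (g x, h x) \<in> E})"

lemma has_base_UU:
  fixes G :: "('a \<Rightarrow> 'a) set"
  shows "has_base (UU G) {(A, E). finite A \<and> eventually (\<lambda>z. z \<in> E) (UX G)} (\<lambda>ae. cover_ent G (fst ae) (snd ae))"
  unfolding UU_def cover_ent_def[symmetric]
proof (rule has_base_INF_principal)
  show "{(A, E). finite A \<and> eventually (\<lambda>z. z \<in> E) (UX G)} \<noteq> {}"
    by (intro ex_in_conv[THEN iffD1] exI[of _ "({}, UNIV)"]) simp
next
  fix ae ae' :: "'a set \<times> ('a \<times> 'a) set"
  assume "ae \<in> {(A, E). finite A \<and> eventually (\<lambda>z. z \<in> E) (UX G)}"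
    and "ae' \<in> {(A, E). finite A \<and> eventually (\<lambda>z. z \<in> E) (UX G)}"
  then obtain A E A' E' where "ae = (A, E)" "ae' = (A', E')" "finite A" "finite A'"
    and "eventually (\<lambda>z. z \<in> E) (UX G)" "eventually (\<lambda>z. z \<in> E') (UX G)"
    by auto
  moreover have "cover_ent G (A \<union> A') (E \<inter> E') \<subseteq> cover_ent G A E \<inter> cover_ent G A' E'"
    unfolding cover_ent_def by blast
  ultimately show "\<exists>k\<in>{(A, E). finite A \<and> eventually (\<lambda>z. z \<in> E) (UX G)}.
      cover_ent G (fst k) (snd k) \<subseteq> cover_ent G (fst ae) (snd ae) \<inter> cover_ent G (fst ae') (snd ae')"
    by (intro bexI[of _ "(A \<union> A', E \<inter> E')"]) (auto simp: eventually_conj)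
qed

lemma roelcke_unif_eq_UU:
  fixes G :: "('a \<Rightarrow> 'a) set"
  assumes "is_perm_group G" and "ultratransitive G"
  shows "roelcke_unif G = UU G"
proof (rule has_base_eq[OF has_base_roelcke_unif[OF assms] has_base_UU])
  fix C :: "'a set" assume "C \<in> {C. finite C}"
  then have "eventually (\<lambda>z. z \<in> kernel_rel UNIV (cell C)) (UX G)"
    by (intro has_base_eventuallyI[OF has_base_UX[OF assms]]) auto
  moreover have "cover_ent G C (kernel_rel UNIV (cell C)) \<subseteq> kernel_rel G (cell_restrict C C)"
    by (auto simp: cover_ent_def cell_restrict_eq_iff)
  ultimately show "\<exists>ae\<in>{(A, E). finite A \<and> eventually (\<lambda>z. z \<in> E) (UX G)}.
      cover_ent G (fst ae) (snd ae) \<subseteq> kernel_rel G (cell_restrict C C)"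
    using \<open>C \<in> {C. finite C}\<close> by (intro bexI[of _ "(C, kernel_rel UNIV (cell C))"]) auto
next
  fix ae :: "'a set \<times> ('a \<times> 'a) set"
  assume "ae \<in> {(A, E). finite A \<and> eventually (\<lambda>z. z \<in> E) (UX G)}"
  then obtain A E where ae: "ae = (A, E)" "finite A" and "eventually (\<lambda>z. z \<in> E) (UX G)"
    by auto
  then obtain B where "finite B" and BE: "\<forall>z\<in>kernel_rel UNIV (cell B). z \<in> E"
    by (auto elim: has_base_eventuallyE[OF has_base_UX[OF assms]])
  have "kernel_rel G (cell_restrict (A \<union> B) (A \<union> B)) \<subseteq> cover_ent G A E"
  proof
    fix z assume "z \<in> kernel_rel G (cell_restrict (A \<union> B) (A \<union> B))"
    then obtain h1 h2 where z: "z = (h1, h2)" "h1 \<in> G" "h2 \<in> G"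
      and agree: "\<forall>x\<in>A \<union> B. cell (A \<union> B) (h1 x) = cell (A \<union> B) (h2 x)"
      by (cases z) (auto simp: cell_restrict_eq_iff)
    have "(h1 x, h1 x) \<in> E" for x
      using BE by simp
    moreover have "(h1 x, h2 x) \<in> E" if "x \<in> A" for x
      using BE cell_eq_mono[OF Un_upper2 bspec[OF agree]] that by simp
    ultimately show "z \<in> cover_ent G A E"
      using z unfolding cover_ent_def by blast
  qed
  then show "\<exists>C\<in>{C. finite C}. kernel_rel G (cell_restrict C C) \<subseteq> cover_ent G (fst ae) (snd ae)"
    using ae \<open>finite B\<close> by (intro bexI[of _ "A \<union> B"]) auto
qed

section \<open>The enveloping semigroup\<close>

abbreviation alphaX_power :: "('a option \<Rightarrow> 'a option) topology" where
  "alphaX_power \<equiv> product_topology (\<lambda>_. alphaX) UNIV"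

definition alpha_sig :: "'a set \<Rightarrow> ('a option \<Rightarrow> 'a option) \<Rightarrow> 'a option \<Rightarrow> 'a option option" where
  "alpha_sig C = cell_restrict (insert None (Some ` C)) (Some ` C)"

lemma alpha_sig_eq_iff:
  "alpha_sig C p = alpha_sig C q \<longleftrightarrow>
    (\<forall>u\<in>insert None (Some ` C). cell (Some ` C) (p u) = cell (Some ` C) (q u))"
  by (simp add: alpha_sig_def cell_restrict_eq_iff)

lemma alpha_sig_eq_mono: "C \<subseteq> C' \<Longrightarrow> alpha_sig C' p = alpha_sig C' q \<Longrightarrow> alpha_sig C p = alpha_sig C q"
  unfolding alpha_sig_def by (erule cell_restrict_eq_mono[rotated 2]) auto

lemma topspace_alphaX_power [simp]: "topspace alphaX_power = UNIV"
  by (simp add: PiE_UNIV_domain)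

lemma openin_alpha_sig_fibre:
  assumes "finite C"
  shows "openin alphaX_power {q. alpha_sig C q = alpha_sig C p}"
proof -
  let ?S = "\<lambda>u. {v. u \<in> insert None (Some ` C) \<longrightarrow> cell (Some ` C) v = cell (Some ` C) (p u)}"
  have "{q. alpha_sig C q = alpha_sig C p} = PiE UNIV ?S"
    unfolding alpha_sig_eq_iff PiE_UNIV_domain Pi_def by blast
  moreover have "openin alphaX_power (PiE UNIV ?S)"
    unfolding openin_PiE_gen
  proof (intro disjI2 conjI ballI)
    have "{u \<in> UNIV. ?S u \<noteq> topspace alphaX} \<subseteq> insert None (Some ` C)"
      by auto
    then show "finite {u \<in> UNIV. ?S u \<noteq> topspace alphaX}"
      using assms by (auto intro: finite_subset)
    show "openin alphaX (?S u)" for u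
    proof (cases "u \<in> insert None (Some ` C)")
      case True
      then show ?thesis
        using openin_fibre[OF open_fibre_base_alphaX, of C "p u"] assms by simp
    next
      case False
      then have "?S u = topspace alphaX"
        by auto
      then show ?thesis
        by (metis openin_topspace)
    qed
  qed
  ultimately show ?thesis
    by simp
qed

lemma alpha_sig_fibre_subset_open:
  assumes "openin alphaX_power W" and "p \<in> W"
  shows "\<exists>C. finite C \<and> {q. alpha_sig C q = alpha_sig C p} \<subseteq> W"
proof -
  have "\<exists>U. finite {u \<in> UNIV. U u \<noteq> topspace alphaX} \<and> (\<forall>u\<in>UNIV. openin alphaX (U u)) \<and>
      p \<in> PiE UNIV U \<and> PiE UNIV U \<subseteq> W"
    using assms(1)[unfolded openin_product_topology_alt] assms(2) by blast
  then obtain U where U: "finite {u. U u \<noteq> UNIV}" "\<And>u. openin alphaX (U u)" "\<And>u. p u \<in> U u"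
      "PiE UNIV U \<subseteq> W"
    by (auto simp: PiE_UNIV_domain)
  have "\<exists>D. finite D \<and> {v. cell (Some ` D) v = cell (Some ` D) (p u)} \<subseteq> U u" for u
    using fibre_subset_open[OF open_fibre_base_alphaX U(2) U(3)] by auto
  then obtain D where D: "\<And>u. finite (D u)" "\<And>u. {v. cell (Some ` D u) v = cell (Some ` D u) (p u)} \<subseteq> U u"
    by metis
  define C where "C = (\<Union>u\<in>{u. U u \<noteq> UNIV}. D u \<union> Some -` {u})"
  have "finite C"
    unfolding C_def using U(1) D(1) by (simp add: finite_vimageI)
  moreover have "{q. alpha_sig C q = alpha_sig C p} \<subseteq> PiE UNIV U"
  proof
    fix q assume q: "q \<in> {q. alpha_sig C q = alpha_sig C p}"
    have "q u \<in> U u" for u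
    proof (cases "U u = UNIV")
      case False
      then have "u \<in> insert None (Some ` C)" and "D u \<subseteq> C"
        unfolding C_def by (cases u; auto)+
      moreover have "\<forall>v\<in>insert None (Some ` C). cell (Some ` C) (q v) = cell (Some ` C) (p v)"
        using q unfolding alpha_sig_eq_iff by blast
      ultimately have "cell (Some ` C) (q u) = cell (Some ` C) (p u)"
        by blast
      then have "cell (Some ` D u) (q u) = cell (Some ` D u) (p u)"
        by (rule cell_eq_mono[OF image_mono[OF \<open>D u \<subseteq> C\<close>]])
      then show ?thesis
        using D(2) by blast
    qed simp
    then show "q \<in> PiE UNIV U"
      by (simp add: PiE_UNIV_domain)
  qed
  ultimately show ?thesis
    using U(4) by blast
qed

lemma open_fibre_base_alphaX_power: "open_fibre_base alphaX_power {C. finite C} alpha_sig"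
  unfolding open_fibre_base_def topspace_alphaX_power
proof (intro conjI ballI allI impI)
  show "{C. finite C} \<noteq> {}"
    using finite.emptyI by blast
next
  fix C C' :: "'a set" assume "C \<in> {C. finite C}" "C' \<in> {C. finite C}"
  moreover have "kernel_rel UNIV (alpha_sig (C \<union> C')) \<subseteq> kernel_rel UNIV (alpha_sig C'')"
    if "C'' \<subseteq> C \<union> C'" for C''
    by (intro kernel_rel_subset alpha_sig_eq_mono[OF that])
  ultimately show "\<exists>k\<in>{C. finite C}. kernel_rel UNIV (alpha_sig k)
      \<subseteq> kernel_rel UNIV (alpha_sig C) \<inter> kernel_rel UNIV (alpha_sig C')"
    by (intro bexI[of _ "C \<union> C'"]) auto
next
  fix C :: "'a set" and p assume "C \<in> {C. finite C}"
  then show "openin alphaX_power {q \<in> UNIV. alpha_sig C q = alpha_sig C p}"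
    using openin_alpha_sig_fibre by simp
next
  fix W p assume "openin alphaX_power W" "p \<in> W"
  then show "\<exists>C\<in>{C. finite C}. {q \<in> UNIV. alpha_sig C q = alpha_sig C p} \<subseteq> W"
    using alpha_sig_fibre_subset_open by auto
qed

lemma compact_space_alphaX_power: "compact_space alphaX_power"
  by (simp add: compact_space_product_topology compact_space_alphaX)

lemma t1_space_alphaX_power: "t1_space alphaX_power"
  by (simp add: t1_space_product_topology t1_space_alphaX)

lemma jmap_simps [simp]: "jmap g None = None" "jmap g (Some x) = Some (g x)"
  by (simp_all add: jmap_def)

lemma inj_jmap: "inj jmap"
proof (rule injI, rule ext)
  fix g h :: "'a \<Rightarrow> 'a" and x assume "jmap g = jmap h"
  then have "jmap g (Some x) = jmap h (Some x)"
    by simp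
  then show "g x = h x"
    by simp
qed

lemma alpha_sig_jmap_eq_iff:
  "alpha_sig C (jmap g) = alpha_sig C (jmap h) \<longleftrightarrow> cell_restrict C C g = cell_restrict C C h"
  by (simp add: alpha_sig_eq_iff cell_restrict_eq_iff cell_Some_eq_iff)

lemma jmap_closure_completion:
  assumes base: "has_base U {C. finite C} (\<lambda>C. kernel_rel S (cell_restrict C C))"
    and K: "K = alphaX_power closure_of (jmap ` S)"
  shows "is_completion S U K (topo_unif (subtopology alphaX_power K)) jmap
    \<and> unif_induces (topo_unif (subtopology alphaX_power K)) (subtopology alphaX_power K)"
proof -
  let ?T = "subtopology alphaX_power K"
  have B: "open_fibre_base ?T {C. finite C} alpha_sig"
    by (rule open_fibre_base_subtopology[OF open_fibre_base_alphaX_power])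
  have "compact_space ?T"
    unfolding K by (intro compact_space_subtopology closedin_compact_space compact_space_alphaX_power
      closedin_closure_of)
  moreover have "t1_space ?T"
    by (intro t1_space_subtopology t1_space_alphaX_power)
  ultimately have V: "has_base (topo_unif ?T) {C. finite C} (\<lambda>C. kernel_rel K (alpha_sig C))"
    using has_base_topo_unif_compact[OF _ _ B] by simp
  have "is_completion S U K (topo_unif ?T) jmap"
  proof (rule is_completion_kernel_bases[OF base V])
    show "{C. finite C} \<noteq> {}"
      using finite.emptyI by blast
    show "jmap ` S \<subseteq> K"
      unfolding K by (rule closure_of_subset) simp
    show "inj_on jmap S"
      using inj_jmap by (rule inj_on_subset) simp
    show "alpha_sig C (jmap g) = alpha_sig C (jmap h) \<longleftrightarrow> cell_restrict C C g = cell_restrict C C h"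
      for C g h
      by (rule alpha_sig_jmap_eq_iff)
    show "\<exists>C\<in>{C. finite C}. alpha_sig C p \<noteq> alpha_sig C q" if "p \<in> K" "q \<in> K" "p \<noteq> q" for p q
      by (rule open_fibre_base_separating[OF \<open>t1_space ?T\<close> B]) (use that in simp_all)
    show "unif_complete K (topo_unif ?T)"
      using unif_complete_compact[OF \<open>compact_space ?T\<close> B] V by simp
    show "\<exists>g\<in>S. alpha_sig C (jmap g) = alpha_sig C p" if "C \<in> {C. finite C}" "p \<in> K" for C p
    proof -
      have "\<forall>C\<in>{C. finite C}. \<exists>q\<in>jmap ` S \<inter> UNIV. alpha_sig C q = alpha_sig C p"
        using \<open>p \<in> K\<close> unfolding K in_closure_of_open_fibre_base[OF open_fibre_base_alphaX_power] by simp
      then show ?thesis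
        using that(1) by blast
    qed
  qed
  moreover have "unif_induces (topo_unif ?T) ?T"
    using unif_induces_open_fibre_base[OF _ B] V by simp
  ultimately show ?thesis ..
qed

lemma closure_jmap_eq_perms:
  fixes G :: "('a \<Rightarrow> 'a) set"
  assumes "is_perm_group G" and "ultratransitive G"
  shows "alphaX_power closure_of (jmap ` G) = alphaX_power closure_of (jmap ` perms)"
proof
  show "alphaX_power closure_of (jmap ` G) \<subseteq> alphaX_power closure_of (jmap ` perms)"
    using assms(1) by (intro closure_of_mono image_mono) (simp add: is_perm_group_def)
  have "jmap ` perms \<subseteq> alphaX_power closure_of (jmap ` G)"
  proof
    fix p :: "'a option \<Rightarrow> 'a option" assume "p \<in> jmap ` perms"
    then obtain f where "bij f" and p: "p = jmap f"
      by (auto simp: perms_def)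
    have "\<exists>q\<in>jmap ` G \<inter> UNIV. alpha_sig C q = alpha_sig C p" if C: "finite C" for C :: "'a set"
    proof -
      obtain g where "g \<in> G" "\<forall>x\<in>C. g x = f x"
        using ultratransitive_extend[OF assms(2) C inj_on_subset[OF bij_is_inj[OF \<open>bij f\<close>] subset_UNIV]]
        by blast
      then have "alpha_sig C (jmap g) = alpha_sig C p"
        unfolding p alpha_sig_jmap_eq_iff cell_restrict_eq_iff by simp
      then show ?thesis
        using \<open>g \<in> G\<close> by blast
    qed
    then show "p \<in> alphaX_power closure_of (jmap ` G)"
      unfolding in_closure_of_open_fibre_base[OF open_fibre_base_alphaX_power] by simp
  qed
  then show "alphaX_power closure_of (jmap ` perms) \<subseteq> alphaX_power closure_of (jmap ` G)"
    by (rule closure_of_minimal) simp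
qed

theorem corollary4p2:
  fixes G :: "('a \<Rightarrow> 'a) set"
  assumes "infinite (UNIV :: 'a set)"
    and "is_perm_group G"
    and "ultratransitive G"
  shows "totally_bounded_unif UNIV (UX G)
    \<and> (is_completion UNIV (UX G) UNIV (topo_unif alphaX) Some
        \<and> unif_induces (topo_unif alphaX) alphaX)
    \<and> roelcke_unif G = UU G
    \<and> totally_bounded_unif G (roelcke_unif G)
    \<and> (let P = product_topology (\<lambda>_. alphaX) UNIV;
           K = P closure_of (jmap ` G)
       in is_completion G (roelcke_unif G) K (topo_unif (subtopology P K)) jmap
          \<and> unif_induces (topo_unif (subtopology P K)) (subtopology P K)
          \<and> K = P closure_of (jmap ` perms)
          \<and> is_completion perms (roelcke_unif perms) K (topo_unif (subtopology P K)) jmap)"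
proof -
  note UX = has_base_UX[OF assms(2,3)]
  note roelcke = has_base_roelcke_unif[OF assms(2,3)]
  define K where "K = alphaX_power closure_of (jmap ` G)"
  have K_perms: "K = alphaX_power closure_of (jmap ` perms)"
    unfolding K_def by (rule closure_jmap_eq_perms[OF assms(2,3)])
  have "totally_bounded_unif UNIV (UX G)"
    by (rule totally_bounded_kernel_base[OF UX finite_range_cell]) simp
  moreover have "totally_bounded_unif G (roelcke_unif G)"
    by (rule totally_bounded_kernel_base[OF roelcke finite_image_cell_restrict]) simp_all
  moreover note alphaX_completion[OF assms(1) UX] unif_induces_alphaX
    roelcke_unif_eq_UU[OF assms(2,3)] jmap_closure_completion[OF roelcke K_def]
    jmap_closure_completion[OF has_base_roelcke_unif[OF is_perm_group_perms ultratransitive_perms] K_perms]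
  ultimately show ?thesis
    unfolding Let_def K_def[symmetric] using K_perms by blast
qed

end
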